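(* Let $r\ge1$, $\mathbf{M}=(M_0,\dots,M_{e-1})\in\mathbb{Z}_{\ge0}^e$ and $(\boldsymbol\lambda,\mathbf{s}),(\boldsymbol\mu,\mathbf{s}')\in\mathcal{A}_e^r$. Then $(\boldsymbol\lambda,\mathbf{s})\approx_e(\boldsymbol\mu,\mathbf{s}')$ if and only if $\mathrm{Str}((\boldsymbol\lambda,\mathbf{s});\mathbf{M})\approx_e\mathrm{Str}((\boldsymbol\mu,\mathbf{s}');\mathbf{M})$.
   Context: Fix an integer $e\ge 2$. A partition is a weakly decreasing sequence $\lambda=(\lambda_1,\lambda_2,\dots)$ of non-negative integers with finite sum $|\lambda|$; $\Lambda$ denotes the set of partitions and $\Lambda^{(m)}$ the set of $m$-multipartitions, i.e. $m$-tuples $\boldsymbol\lambda=(\lambda^{(1)},\dots,\lambda^{(m)})$ of partitions, with $|\boldsymbol\lambda|=\sum_k|\lambda^{(k)}|$. A $\beta$-set is a subset $B\subseteq\mathbb{Z}$ containing all sufficiently small integers and no sufficiently large ones. For $\lambda\in\Lambda$ and $s\in\mathbb{Z}$ set $B_s(\lambda)=\{\lambda_i-i+s : i\ge 1\}$; every $\beta$-set equals $B_s(\lambda)$ for a unique pair $(\lambda,s)$. Let $\mathcal{A}_e=\Lambda\times\mathbb{Z}$ (abacus configurations with $e$ runners) and $\mathcal{A}_e^m=\Lambda^{(m)}\times\mathbb{Z}^m$, where $(\boldsymbol\lambda,\mathbf{s})$ is identified with the $m$-tuple of $\beta$-sets $(B_{s_1}(\lambda^{(1)}),\dots,B_{s_m}(\lambda^{(m)}))$.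 Blocks: for $(\boldsymbol\lambda,\mathbf{s})\in\mathcal{A}_e^m$, its $e$-residue multiset is the multiset of the values $s_k+y-x \bmod e$ over all nodes $(x,y,k)$ with $x\ge1$, $1\le y\le\lambda^{(k)}_x$, $1\le k\le m$. Define $(\boldsymbol\lambda,\mathbf{s})\approx_e(\boldsymbol\mu,\mathbf{s}')$ iff $\mathbf{s}=\mathbf{s}'$, $|\boldsymbol\lambda|=|\boldsymbol\mu|$ and the $e$-residue multisets coincide. Its equivalence classes are called blocks. The map $\eta$: for $(\lambda,s)\in\mathcal{A}_e$ with $B=B_s(\lambda)$ and $0\le i<e$, the set $C_i=\{(b-i)/e : b\in B,\ b\equiv i \bmod e\}$ is a $\beta$-set, so $C_i=B_{t_i}(\rho_i)$ for a unique $(\rho_i,t_i)\in\Lambda\times\mathbb{Z}$; set $\eta(\lambda,s)=((\rho_0,\dots,\rho_{e-1}),(t_0,\dots,t_{e-1}))$; $\eta$ is a bijection $\mathcal{A}_e\to\Lambda^{(e)}\times\mathbb{Z}^e$. Stretching: for $\mathbf{M}\in\mathbb{Z}^e$ and $(\lambda,s)\in\mathcal{A}_e$ with $\eta(\lambda,s)=(\boldsymbol\rho,(t_0,\dots,t_{e-1}))$, $\mathrm{Str}((\lambda,s);\mathbf{M})$ is the unique element of $\mathcal{A}_e$ whose image under $\eta$ is $(\boldsymbol\rho,(t_0+M_0,\dots,t_{e-1}+M_{e-1}))$. For $(\boldsymbol\lambda,\mathbf{s})\in\mathcal{A}_e^r$, $\mathrm{Str}((\boldsymbol\lambda,\mathbf{s});\mathbf{M})$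 is obtained by applying this to each component $(\lambda^{(k)},s_k)$; for a subset $\mathcal{R}$, $\mathrm{Str}(\mathcal{R};\mathbf{M})$ is its image. *)

theory Defs
  imports Main "HOL-Library.Multiset"
begin

text \<open>A partition lambda = (lambda_1, lambda_2, ...) is represented 0-indexed as a function
  lam :: nat => nat with lam i = lambda_(i+1).\<close>

definition is_partition :: "(nat \<Rightarrow> nat) \<Rightarrow> bool" where
  "is_partition lam \<longleftrightarrow> (\<forall>i. lam (Suc i) \<le> lam i) \<and> finite {i. lam i \<noteq> 0}"

definition part_size :: "(nat \<Rightarrow> nat) \<Rightarrow> nat" where
  "part_size lam = (\<Sum>i\<in>{i. lam i \<noteq> 0}. lam i)"

definition beta_set :: "int \<Rightarrow> (nat \<Rightarrow> nat) \<Rightarrow> int set" where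
  "beta_set s lam = {int (lam (i - 1)) - int i + s | i. i \<ge> 1}"

definition is_beta_set :: "int set \<Rightarrow> bool" where
  "is_beta_set B \<longleftrightarrow> (\<exists>n. \<forall>b\<le>n. b \<in> B) \<and> (\<exists>n. \<forall>b\<ge>n. b \<notin> B)"

type_synonym config = "(nat \<Rightarrow> nat) \<times> int"

definition config_of :: "int set \<Rightarrow> config" where
  "config_of B = (THE c. is_partition (fst c) \<and> beta_set (snd c) (fst c) = B)"

definition eta :: "nat \<Rightarrow> config \<Rightarrow> config list" where
  "eta e c = map (\<lambda>i. config_of
      {(b - int i) div int e | b. b \<in> beta_set (snd c) (fst c) \<and> b mod int e = int i}) [0..<e]"

definition Str :: "nat \<Rightarrow> config \<Rightarrow> int list \<Rightarrow> config" where
  "Str e c M = (THE c'. is_partition (fst c') \<and>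
      eta e c' = map (\<lambda>i. (fst (eta e c ! i), snd (eta e c ! i) + M ! i)) [0..<e])"

definition is_multiconfig :: "config list \<Rightarrow> bool" where
  "is_multiconfig cs \<longleftrightarrow> (\<forall>c\<in>set cs. is_partition (fst c))"

definition Str_multi :: "nat \<Rightarrow> config list \<Rightarrow> int list \<Rightarrow> config list" where
  "Str_multi e cs M = map (\<lambda>c. Str e c M) cs"

definition multi_size :: "config list \<Rightarrow> nat" where
  "multi_size cs = (\<Sum>c\<leftarrow>cs. part_size (fst c))"

definition nodes :: "config list \<Rightarrow> (nat \<times> nat \<times> nat) set" where
  "nodes cs = {(x, y, k). 1 \<le> x \<and> 1 \<le> y \<and> 1 \<le> k \<and> k \<le> length cs
       \<and> y \<le> fst (cs ! (k - 1)) (x - 1)}"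

definition residue_mset :: "nat \<Rightarrow> config list \<Rightarrow> int multiset" where
  "residue_mset e cs = image_mset
     (\<lambda>(x, y, k). (snd (cs ! (k - 1)) + int y - int x) mod int e) (mset_set (nodes cs))"

definition block_equiv :: "nat \<Rightarrow> config list \<Rightarrow> config list \<Rightarrow> bool" where
  "block_equiv e cs ds \<longleftrightarrow> map snd cs = map snd ds \<and> multi_size cs = multi_size ds
      \<and> residue_mset e cs = residue_mset e ds"

end

theory Submission
  imports Defs
begin

text \<open>Choose a level L below which every abacus involved is full of beads. Relative to L, the
  charge, the size and the number of nodes of residue j of a configuration are, up to terms
  depending only on the charge, the sums over its beads b >= L of 1, of b and of (b - j) div e.
  Hence multiconfigurations with equal charges lie in the same block iff their bead sums of b and
  of the indicators of the residue classes mod e agree. Stretching moves each bead b to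
  b + e M_(b mod e); it preserves residues, so it shifts every residue-class sum by a constant
  and the sum of b by e times the M-weighted residue-class sums plus a constant. Both
  multiconfigurations are shifted alike, so the equalities are preserved and reflected.\<close>

section \<open>Beta numbers\<close>

definition beta_num :: "int \<Rightarrow> (nat \<Rightarrow> nat) \<Rightarrow> nat \<Rightarrow> int" where
  "beta_num s lam i = int (lam i) - int i - 1 + s"

lemma beta_set_eq_range: "beta_set s lam = range (beta_num s lam)"
proof (intro equalityI subsetI)
  fix b assume "b \<in> beta_set s lam"
  then obtain i where "1 \<le> i" "b = int (lam (i - 1)) - int i + s"
    unfolding beta_set_def by blast
  then have "b = beta_num s lam (i - 1)" by (simp add: beta_num_def of_nat_diff)
  then show "b \<in> range (beta_num s lam)" by blast
next
  fix b assume "b \<in> range (beta_num s lam)"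
  then obtain i where "b = beta_num s lam i" by blast
  then show "b \<in> beta_set s lam"
    unfolding beta_set_def beta_num_def by (auto intro!: exI[of _ "Suc i"])
qed

lemma partition_antimono: "is_partition lam \<Longrightarrow> i \<le> j \<Longrightarrow> lam j \<le> lam i"
  unfolding is_partition_def by (metis lift_Suc_antimono_le)

lemma partition_eventually_zero:
  assumes "is_partition lam"
  obtains n where "\<forall>i\<ge>n. lam i = 0" and "k \<le> int n"
proof -
  have "finite {i. lam i \<noteq> 0}" using assms unfolding is_partition_def by blast
  then obtain n where "\<forall>i\<in>{i. lam i \<noteq> 0}. i < n" using finite_nat_set_iff_bounded by blast
  then have "\<forall>i\<ge>n + nat k. lam i = 0" by force
  then show ?thesis using that by force
qed

lemma beta_num_decreasing: "is_partition lam \<Longrightarrow> i < j \<Longrightarrow> beta_num s lam j < beta_num s lam i"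
  unfolding beta_num_def using partition_antimono[of lam i j] by auto

lemma beta_num_less_iff: "is_partition lam \<Longrightarrow> beta_num s lam j < beta_num s lam i \<longleftrightarrow> i < j"
  by (metis beta_num_decreasing less_asym linorder_neqE_nat)

lemma inj_beta_num: "is_partition lam \<Longrightarrow> inj (beta_num s lam)"
  by (metis beta_num_decreasing injI less_irrefl linorder_neqE_nat)

lemma beta_num_tail: "\<forall>i\<ge>n. lam i = 0 \<Longrightarrow> n \<le> i \<Longrightarrow> beta_num s lam i = s - int i - 1"
  unfolding beta_num_def by auto

lemma beta_num_lower_bound: "s - int i - 1 \<le> beta_num s lam i"
  unfolding beta_num_def by auto

lemma beta_set_contains_below:
  assumes "\<forall>i\<ge>n. lam i = 0" and "a < s - int n"
  shows "a \<in> beta_set s lam"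
proof -
  have "beta_num s lam (nat (s - a - 1)) = a" using assms beta_num_tail[of n lam] by auto
  then show ?thesis unfolding beta_set_eq_range by (metis rangeI)
qed

lemma card_beta_set_above:
  assumes "is_partition lam"
  shows "card {b \<in> beta_set s lam. beta_num s lam i < b} = i"
proof -
  have "{b \<in> beta_set s lam. beta_num s lam i < b} = beta_num s lam ` {..<i}"
    unfolding beta_set_eq_range using beta_num_less_iff[OF assms] by auto
  then show ?thesis by (simp add: card_image inj_on_subset[OF inj_beta_num[OF assms]])
qed

lemma beta_set_inj:
  assumes p: "is_partition lam" "is_partition lam'" and eq: "beta_set s lam = beta_set s' lam'"
  shows "lam = lam' \<and> s = s'"
proof -
  have same_num: "beta_num s lam i = beta_num s' lam' i" for i
  proof -
    obtain k where k: "beta_num s' lam' i = beta_num s lam k"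
      using eq unfolding beta_set_eq_range by (metis rangeE rangeI)
    have "k = card {b \<in> beta_set s lam. beta_num s lam k < b}"
      by (simp add: card_beta_set_above[OF p(1)])
    also have "\<dots> = card {b \<in> beta_set s' lam'. beta_num s' lam' i < b}" using eq k by simp
    also have "\<dots> = i" by (rule card_beta_set_above[OF p(2)])
    finally show ?thesis using k by simp
  qed
  obtain n where n: "\<forall>i\<ge>n. lam i = 0" using partition_eventually_zero[OF p(1)] by blast
  obtain n' where n': "\<forall>i\<ge>n'. lam' i = 0" using partition_eventually_zero[OF p(2)] by blast
  have "s = s'"
    using same_num[of "max n n'"] beta_num_tail[OF n, of "max n n'" s] beta_num_tail[OF n', of "max n n'" s']
    by simp
  moreover have "lam i = lam' i" for i
    using same_num[of i] \<open>s = s'\<close> unfolding beta_num_def by simp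
  ultimately show ?thesis by (simp add: fun_eq_iff)
qed

lemma config_of_beta_set: "is_partition lam \<Longrightarrow> config_of (beta_set s lam) = (lam, s)"
  unfolding config_of_def by (rule the_equality) (auto dest: beta_set_inj)

lemma is_beta_set_beta_set:
  assumes p: "is_partition lam"
  shows "is_beta_set (beta_set s lam)"
proof -
  obtain n where n: "\<forall>i\<ge>n. lam i = 0" using partition_eventually_zero[OF p] by blast
  have "b \<in> beta_set s lam" if "b \<le> s - int n - 1" for b
    using that beta_set_contains_below[OF n] by simp
  moreover have "b \<notin> beta_set s lam" if "int (lam 0) + s \<le> b" for b
  proof
    assume "b \<in> beta_set s lam"
    then obtain i where "b = beta_num s lam i" unfolding beta_set_eq_range by blast
    then show False using that partition_antimono[OF p, of 0 i] unfolding beta_num_def by simp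
  qed
  ultimately show ?thesis unfolding is_beta_set_def by blast
qed

lemma partition_of_decreasing:
  fixes f :: "nat \<Rightarrow> int"
  assumes dec: "\<And>i. f (Suc i) < f i" and tail: "\<And>i. m \<le> i \<Longrightarrow> f i = s - int i - 1"
  obtains lam where "is_partition lam" and "beta_num s lam = f"
proof -
  define g where "g i = f i + int i" for i
  have g_dec: "g (Suc i) \<le> g i" for i using dec[of i] unfolding g_def by simp
  have g_tail: "m \<le> i \<Longrightarrow> g i = s - 1" for i using tail unfolding g_def by simp
  have g_ge: "s - 1 \<le> g i" for i
  proof (cases "i \<le> m")
    case True
    then show ?thesis using lift_Suc_antimono_le[of g, OF g_dec True] g_tail[of m] by simp
  qed (simp add: g_tail)
  define lam where "lam i = nat (g i - (s - 1))" for i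
  have "is_partition lam"
    unfolding is_partition_def
  proof
    show "\<forall>i. lam (Suc i) \<le> lam i" unfolding lam_def using g_dec by (simp add: nat_mono)
    have "i < m" if "lam i \<noteq> 0" for i
      using that g_tail[of i] unfolding lam_def by (cases "m \<le> i") auto
    then have "{i. lam i \<noteq> 0} \<subseteq> {..<m}" by blast
    then show "finite {i. lam i \<noteq> 0}" by (rule finite_subset) simp
  qed
  moreover have "beta_num s lam = f"
    using g_ge by (intro ext) (simp add: beta_num_def lam_def g_def)
  ultimately show ?thesis using that by blast
qed

lemma decreasing_enumeration:
  fixes K :: int
  assumes fin: "finite F" and above: "F \<subseteq> {K<..}"
  obtains f :: "nat \<Rightarrow> int" and m where "\<And>i. f (Suc i) < f i"
    and "\<And>i. m \<le> i \<Longrightarrow> f i = K + int m - int i" and "range f = F \<union> {..K}"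
proof -
  define xs where "xs = sorted_list_of_set F"
  define m where "m = length xs"
  define f where "f i = (if i < m then xs ! (m - 1 - i) else K + int m - int i)" for i
  have xs: "sorted_wrt (<) xs" "set xs = F"
    unfolding xs_def using strict_sorted_list_of_set set_sorted_list_of_set[OF fin] by blast+
  have xs_above: "K < xs ! k" if "k < m" for k
    using that nth_mem[of k xs] xs(2) above unfolding m_def by auto
  have "f (Suc i) < f i" for i
  proof (cases "Suc i < m")
    case True
    then show ?thesis
      using sorted_wrt_nth_less[OF xs(1), of "m - 2 - i" "m - 1 - i"] unfolding f_def m_def by auto
  next
    case False
    show ?thesis
    proof (cases "i < m")
      case True
      then have "f i = xs ! 0" "f (Suc i) = K" using False unfolding f_def by auto
      then show ?thesis using xs_above[of 0] True by simp
    qed (simp add: f_def)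
  qed
  moreover have "f i = K + int m - int i" if "m \<le> i" for i using that unfolding f_def by simp
  moreover have "range f = F \<union> {..K}"
  proof (intro equalityI subsetI)
    fix b assume "b \<in> range f"
    then obtain i where "b = f i" by blast
    then show "b \<in> F \<union> {..K}"
      using nth_mem[of "m - 1 - i" xs] xs(2) unfolding f_def m_def by (cases "i < m") auto
  next
    fix b assume b: "b \<in> F \<union> {..K}"
    show "b \<in> range f"
    proof (cases "b \<in> F")
      case True
      then obtain k where "k < m" "xs ! k = b" using xs(2) unfolding m_def by (metis in_set_conv_nth)
      then have "f (m - 1 - k) = b" unfolding f_def by auto
      then show ?thesis by (metis rangeI)
    next
      case False
      then have "f (nat (K + int m - b)) = b" using b unfolding f_def by auto
      then show ?thesis by (metis rangeI)
    qed
  qed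
  ultimately show ?thesis using that by blast
qed

lemma beta_set_of_is_beta_set:
  assumes "is_beta_set B"
  obtains lam s where "is_partition lam" and "beta_set s lam = B"
proof -
  obtain K where K: "\<forall>b\<le>K. b \<in> B" using assms unfolding is_beta_set_def by blast
  obtain U where U: "\<forall>b\<ge>U. b \<notin> B" using assms unfolding is_beta_set_def by blast
  have "B \<inter> {K<..} \<subseteq> {K<..<U}" using U by (auto simp: not_le[symmetric])
  then have "finite (B \<inter> {K<..})" by (rule finite_subset) simp
  then obtain f m where dec: "\<And>i. f (Suc i) < f i"
    and tail: "\<And>i. m \<le> i \<Longrightarrow> f i = K + int m - int i"
    and range: "range f = (B \<inter> {K<..}) \<union> {..K}"
    by (rule decreasing_enumeration) auto
  have "f i = (K + 1 + int m) - int i - 1" if "m \<le> i" for i using tail[OF that] by simp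
  then obtain lam where "is_partition lam" "beta_num (K + 1 + int m) lam = f"
    using partition_of_decreasing[of f m "K + 1 + int m"] dec by blast
  moreover have "range f = B" unfolding range using K by auto
  ultimately show ?thesis using that unfolding beta_set_eq_range by blast
qed

section \<open>Counting beads above a level\<close>

lemma beta_num_image_lessThan:
  assumes p: "is_partition lam" and n: "\<forall>i\<ge>n. lam i = 0" and y: "n \<le> y"
  shows "beta_num s lam ` {..<y} = beta_set s lam \<inter> {s - int y..}"
proof (intro equalityI subsetI)
  fix b assume "b \<in> beta_num s lam ` {..<y}"
  then obtain i where "i < y" "b = beta_num s lam i" by blast
  then show "b \<in> beta_set s lam \<inter> {s - int y..}"
    unfolding beta_set_eq_range using beta_num_lower_bound[of s i lam] by auto
next
  fix b assume b: "b \<in> beta_set s lam \<inter> {s - int y..}"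
  then obtain i where i: "b = beta_num s lam i" unfolding beta_set_eq_range by blast
  have "i < y"
  proof (rule ccontr)
    assume "\<not> i < y"
    then show False using b i beta_num_tail[OF n, of i s] y by simp
  qed
  then show "b \<in> beta_num s lam ` {..<y}" using i by blast
qed

lemma sum_lessThan_reflect:
  "(\<Sum>i<y. h (s - int i - 1)) = (\<Sum>a\<in>{s - int y..<s}. (h :: int \<Rightarrow> 'a::comm_monoid_add) a)"
  by (rule sum.reindex_bij_witness[where i="\<lambda>a. nat (s - a - 1)" and j="\<lambda>i. s - int i - 1"]) auto

text \<open>Row i of the diagram corresponds to the integers in the interval from s - i - 1
  (exclusive) to its beta number (inclusive); summing over all rows telescopes into a sum over
  the beads above a level L below which every integer is a bead.\<close>
lemma beta_set_above_level:
  fixes h :: "int \<Rightarrow> 'a::ab_group_add"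
  assumes p: "is_partition lam" and L: "{..<L} \<subseteq> beta_set s lam"
    and y: "\<forall>i\<ge>y. lam i = 0" "s - L \<le> int y"
  shows "finite (beta_set s lam \<inter> {L..})"
    and "int (card (beta_set s lam \<inter> {L..})) = s - L"
    and "(\<Sum>i<y. h (beta_num s lam i) - h (s - int i - 1))
           = (\<Sum>b\<in>beta_set s lam \<inter> {L..}. h b) - (\<Sum>a\<in>{L..<s}. h a)"
proof -
  let ?B = "beta_set s lam"
  have img: "beta_num s lam ` {..<y} = ?B \<inter> {s - int y..}"
    by (rule beta_num_image_lessThan[OF p y(1) order_refl])
  have split: "?B \<inter> {s - int y..} = (?B \<inter> {L..}) \<union> {s - int y..<L}"
    using L y(2) by auto
  have disj: "(?B \<inter> {L..}) \<inter> {s - int y..<L} = {}" by auto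
  have "finite (?B \<inter> {s - int y..})" unfolding img[symmetric] by simp
  then show fin: "finite (?B \<inter> {L..})" unfolding split by simp
  have "card (?B \<inter> {s - int y..}) = y"
    unfolding img[symmetric] by (simp add: card_image inj_on_subset[OF inj_beta_num[OF p]])
  then have "int y = int (card (?B \<inter> {L..})) + (L - (s - int y))"
    using card_Un_disjoint[OF fin _ disj] y(2) unfolding split by simp
  then show "int (card (?B \<inter> {L..})) = s - L" by linarith
  then have "L \<le> s" by linarith
  have "(\<Sum>i<y. h (beta_num s lam i)) = (\<Sum>b\<in>?B \<inter> {s - int y..}. h b)"
    unfolding img[symmetric] by (simp add: sum.reindex inj_on_subset[OF inj_beta_num[OF p]])
  also have "\<dots> = (\<Sum>b\<in>?B \<inter> {L..}. h b) + (\<Sum>a\<in>{s - int y..<L}. h a)"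
    unfolding split using disj fin by (simp add: sum.union_disjoint)
  finally have beads: "(\<Sum>i<y. h (beta_num s lam i))
      = (\<Sum>b\<in>?B \<inter> {L..}. h b) + (\<Sum>a\<in>{s - int y..<L}. h a)" .
  have "{s - int y..<s} = {s - int y..<L} \<union> {L..<s}" using \<open>L \<le> s\<close> y(2) by auto
  then have gaps: "(\<Sum>i<y. h (s - int i - 1)) = (\<Sum>a\<in>{s - int y..<L}. h a) + (\<Sum>a\<in>{L..<s}. h a)"
    unfolding sum_lessThan_reflect by (simp add: sum.union_disjoint ivl_disj_int)
  show "(\<Sum>i<y. h (beta_num s lam i) - h (s - int i - 1))
      = (\<Sum>b\<in>?B \<inter> {L..}. h b) - (\<Sum>a\<in>{L..<s}. h a)"
    using beads gaps by (simp add: sum_subtractf)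
qed

definition beads :: "config \<Rightarrow> int set" where
  "beads c = beta_set (snd c) (fst c)"

definition bead_sum :: "int \<Rightarrow> (int \<Rightarrow> int) \<Rightarrow> config \<Rightarrow> int" where
  "bead_sum L h c = (\<Sum>b\<in>beads c \<inter> {L..}. h b)"

lemma is_beta_set_beads: "is_partition (fst c) \<Longrightarrow> is_beta_set (beads c)"
  unfolding beads_def by (rule is_beta_set_beta_set)

lemma config_of_beads: "is_partition (fst c) \<Longrightarrow> config_of (beads c) = c"
  unfolding beads_def by (simp add: config_of_beta_set)

lemma beads_config_of:
  assumes "is_beta_set B"
  shows "is_partition (fst (config_of B))" and "beads (config_of B) = B"
proof -
  obtain lam s where "is_partition lam" "beta_set s lam = B"
    using beta_set_of_is_beta_set[OF assms] .
  then show "is_partition (fst (config_of B))" "beads (config_of B) = B"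
    using config_of_beta_set[of lam s] unfolding beads_def by auto
qed

lemma beads_eq_iff:
  assumes "is_partition (fst c)" "is_partition (fst c')"
  shows "beads c = beads c' \<longleftrightarrow> c = c'"
  using config_of_beads[OF assms(1)] config_of_beads[OF assms(2)] by metis

lemma exists_level_below_beads:
  assumes "\<forall>c\<in>set cs. is_partition (fst c)"
  obtains L where "\<forall>c\<in>set cs. {..<L} \<subseteq> beads c"
  using assms
proof (induction cs arbitrary: thesis)
  case Nil
  then show ?case by simp
next
  case (Cons c cs)
  obtain L where L: "\<forall>c\<in>set cs. {..<L} \<subseteq> beads c" using Cons by auto
  have "is_partition (fst c)" using Cons.prems(2) by simp
  then obtain n where n: "\<forall>i\<ge>n. fst c i = 0" by (rule partition_eventually_zero)
  have "{..<snd c - int n} \<subseteq> beads c"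
    unfolding beads_def using beta_set_contains_below[OF n] by auto
  then show ?case using Cons.prems(1)[of "min L (snd c - int n)"] L by fastforce
qed

lemma finite_beads_above:
  assumes "is_partition (fst c)" "{..<L} \<subseteq> beads c"
  shows "finite (beads c \<inter> {L..})"
proof -
  obtain n where "\<forall>i\<ge>n. fst c i = 0" "snd c - L \<le> int n"
    using partition_eventually_zero[OF assms(1)] .
  then show ?thesis using beta_set_above_level(1) assms unfolding beads_def by blast
qed

lemma charge_eq_bead_count:
  assumes "is_partition (fst c)" "{..<L} \<subseteq> beads c"
  shows "snd c = L + bead_sum L (\<lambda>_. 1) c"
proof -
  obtain n where "\<forall>i\<ge>n. fst c i = 0" "snd c - L \<le> int n"
    using partition_eventually_zero[OF assms(1)] .
  then show ?thesis
    using beta_set_above_level(2) assms unfolding bead_sum_def beads_def by fastforce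
qed

lemma part_size_eq_bead_sum:
  assumes p: "is_partition (fst c)" and L: "{..<L} \<subseteq> beads c"
  shows "int (part_size (fst c)) = bead_sum L (\<lambda>b. b) c - (\<Sum>a\<in>{L..<snd c}. a)"
proof -
  obtain lam s where c: "c = (lam, s)" by (cases c)
  obtain y where y: "\<forall>i\<ge>y. lam i = 0" "s - L \<le> int y"
    using partition_eventually_zero[of lam] p c by auto
  have "{i. lam i \<noteq> 0} \<subseteq> {..<y}" using y(1) not_less by auto
  then have "part_size lam = (\<Sum>i<y. lam i)"
    unfolding part_size_def by (intro sum.mono_neutral_left) auto
  then have "int (part_size lam) = (\<Sum>i<y. beta_num s lam i - (s - int i - 1))"
    by (simp add: beta_num_def)
  then show ?thesis
    using beta_set_above_level(3)[of lam L s y "\<lambda>b. b"] p L y c unfolding bead_sum_def beads_def by simp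
qed

section \<open>Residue counts\<close>

definition diagram :: "(nat \<Rightarrow> nat) \<Rightarrow> (nat \<times> nat) set" where
  "diagram lam = {(x, y). 1 \<le> x \<and> 1 \<le> y \<and> y \<le> lam (x - 1)}"

definition res_count :: "nat \<Rightarrow> config \<Rightarrow> int \<Rightarrow> nat" where
  "res_count e c j = card {(x, y) \<in> diagram (fst c). (snd c + int y - int x) mod int e = j}"

lemma finite_diagram:
  assumes p: "is_partition lam"
  shows "finite (diagram lam)"
proof -
  obtain n where n: "\<forall>i\<ge>n. lam i = 0" using partition_eventually_zero[OF p] by blast
  have "diagram lam \<subseteq> {..n} \<times> {..lam 0}"
  proof (clarsimp simp: diagram_def)
    fix x y assume xy: "Suc 0 \<le> x" "Suc 0 \<le> y" "y \<le> lam (x - Suc 0)"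
    then have "\<not> n \<le> x - 1" using n by auto
    then show "x \<le> n \<and> y \<le> lam 0" using xy partition_antimono[OF p, of 0 "x - 1"] by auto
  qed
  then show ?thesis by (rule finite_subset) simp
qed

lemma res_count_by_rows:
  assumes n: "\<forall>i\<ge>n. lam i = 0"
  shows "res_count e (lam, s) j
    = (\<Sum>i<n. card {y. 1 \<le> y \<and> y \<le> lam i \<and> (s + int y - int (i + 1)) mod int e = j})"
proof -
  let ?row = "\<lambda>x. {y. 1 \<le> y \<and> y \<le> lam (x - 1) \<and> (s + int y - int x) mod int e = j}"
  have "x \<le> n" if "1 \<le> y" "y \<le> lam (x - 1)" for x y
  proof -
    have "\<not> n \<le> x - 1" using that n by fastforce
    then show ?thesis by linarith
  qed
  then have cells: "{(x, y) \<in> diagram lam. (s + int y - int x) mod int e = j} = Sigma {1..n} ?row"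
    unfolding diagram_def by auto
  have "finite (?row x)" for x by (rule finite_subset[of _ "{..lam (x - 1)}"]) auto
  then have "res_count e (lam, s) j = (\<Sum>x\<in>{1..n}. card (?row x))"
    unfolding res_count_def fst_conv snd_conv cells by (intro card_SigmaI) auto
  also have "\<dots> = (\<Sum>i<n. card (?row (Suc i)))"
    using sum.atLeast1_atMost_eq[of "\<lambda>x. card (?row x)" n] by simp
  finally show ?thesis by simp
qed

lemma diff_div_eq_div_minus_of_bool:
  fixes b j e :: int
  assumes "0 < e" "0 \<le> j" "j \<le> e"
  shows "(b - j) div e = b div e - of_bool (b mod e < j)"
proof -
  have "(b - j) div e = ((b mod e - j) + b div e * e) div e"
    by (simp add: algebra_simps)
  also have "\<dots> = b div e + (b mod e - j) div e" using assms(1) by simp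
  also have "(b mod e - j) div e = - of_bool (b mod e < j)"
  proof (cases "b mod e < j")
    case True
    then have "0 \<le> b mod e - j + e" "b mod e - j + e < e" using assms pos_mod_sign[OF assms(1), of b] by linarith+
    then have "(b mod e - j + e) div e = 0" by (rule div_pos_pos_trivial)
    moreover have "(b mod e - j + e) div e = (b mod e - j) div e + 1"
      using assms(1) div_add_self2[of e "b mod e - j"] by simp
    ultimately show ?thesis using True by simp
  next
    case False
    then have "0 \<le> b mod e - j" "b mod e - j < e" using assms pos_mod_bound[OF assms(1), of b] by linarith+
    then show ?thesis using False by (simp add: div_pos_pos_trivial)
  qed
  finally show ?thesis by simp
qed

lemma diff_div_step:
  fixes b j e :: int
  assumes "0 < e" "0 \<le> j" "j < e"
  shows "(b - j) div e - (b - (j + 1)) div e = of_bool (b mod e = j)"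
  using diff_div_eq_div_minus_of_bool[of e j b] diff_div_eq_div_minus_of_bool[of e "j + 1" b] assms
  by auto

lemma card_residue_class_interval:
  fixes e j u v :: int
  assumes e: "0 < e" and j: "0 \<le> j" "j < e" and uv: "u \<le> v"
  shows "int (card {a\<in>{u<..v}. a mod e = j}) = (v - j) div e - (u - j) div e"
  using uv
proof (induction v rule: int_ge_induct)
  case base
  then show ?case by simp
next
  case (step v)
  have step_div: "(v + 1 - j) div e = (v - j) div e + of_bool ((v + 1) mod e = j)"
    using diff_div_step[OF e j, of "v + 1"] by (simp add: algebra_simps)
  have fin: "finite {a\<in>{u<..v}. a mod e = j}" by (rule finite_subset[of _ "{u<..v}"]) auto
  have "{u<..v + 1} = insert (v + 1) {u<..v}" using step.hyps by auto
  then have interval: "{a\<in>{u<..v + 1}. a mod e = j}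
      = (if (v + 1) mod e = j then insert (v + 1) else id) {a\<in>{u<..v}. a mod e = j}"
    by auto
  show ?case
  proof (cases "(v + 1) mod e = j")
    case True
    then show ?thesis using step.IH step_div fin unfolding interval by simp
  next
    case False
    then show ?thesis using step.IH step_div unfolding interval by simp
  qed
qed

lemma card_row_residue:
  assumes e: "0 < e" and j: "0 \<le> j" "j < int e"
  shows "int (card {y. 1 \<le> y \<and> y \<le> lam i \<and> (s + int y - int (i + 1)) mod int e = j})
       = (beta_num s lam i - j) div int e - (s - int i - 1 - j) div int e"
proof -
  let ?row = "{y. 1 \<le> y \<and> y \<le> lam i \<and> (s + int y - int (i + 1)) mod int e = j}"
  let ?content = "\<lambda>y. s + int y - int (i + 1)"
  have image: "?content ` ?row = {a\<in>{s - int i - 1<..beta_num s lam i}. a mod int e = j}"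
  proof (intro equalityI subsetI)
    fix a assume "a \<in> {a\<in>{s - int i - 1<..beta_num s lam i}. a mod int e = j}"
    then have "a = ?content (nat (a - s + int i + 1))" "nat (a - s + int i + 1) \<in> ?row"
      unfolding beta_num_def by auto
    then show "a \<in> ?content ` ?row" by blast
  qed (auto simp: beta_num_def)
  have "inj_on ?content ?row" by (auto simp: inj_on_def)
  then have "int (card ?row) = int (card (?content ` ?row))" by (simp add: card_image)
  also have "\<dots> = (beta_num s lam i - j) div int e - (s - int i - 1 - j) div int e"
    unfolding image using e j by (intro card_residue_class_interval) (auto simp: beta_num_lower_bound)
  finally show ?thesis .
qed

lemma res_count_eq_bead_sum:
  assumes e: "0 < e" and j: "0 \<le> j" "j < int e"
    and p: "is_partition (fst c)" and L: "{..<L} \<subseteq> beads c"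
  shows "int (res_count e c j)
    = bead_sum L (\<lambda>b. (b - j) div int e) c - (\<Sum>a\<in>{L..<snd c}. (a - j) div int e)"
proof -
  obtain lam s where c: "c = (lam, s)" by (cases c)
  obtain y where y: "\<forall>i\<ge>y. lam i = 0" "s - L \<le> int y"
    using partition_eventually_zero[of lam] p c by auto
  have "int (res_count e c j)
      = (\<Sum>i<y. int (card {y. 1 \<le> y \<and> y \<le> lam i \<and> (s + int y - int (i + 1)) mod int e = j}))"
    unfolding c res_count_by_rows[OF y(1)] by simp
  also have "\<dots> = (\<Sum>i<y. (beta_num s lam i - j) div int e - (s - int i - 1 - j) div int e)"
    using card_row_residue[OF e j] by simp
  also have "\<dots> = bead_sum L (\<lambda>b. (b - j) div int e) c - (\<Sum>a\<in>{L..<snd c}. (a - j) div int e)"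
    using beta_set_above_level(3)[of lam L s y "\<lambda>b. (b - j) div int e"] p L y c
    unfolding bead_sum_def beads_def by simp
  finally show ?thesis .
qed

lemma res_count_eq_0:
  assumes "0 < e" "\<not> (0 \<le> j \<and> j < int e)"
  shows "res_count e c j = 0"
proof -
  have "a mod int e \<noteq> j" for a using assms pos_mod_sign[of "int e" a] pos_mod_bound[of "int e" a] by auto
  then show ?thesis unfolding res_count_def by simp
qed

lemma count_residue_mset:
  assumes "is_multiconfig cs"
  shows "count (residue_mset e cs) j = (\<Sum>c\<leftarrow>cs. res_count e c j)"
proof -
  let ?res = "\<lambda>(x, y, k). (snd (cs ! (k - 1)) + int y - int x) mod int e"
  let ?swap = "\<lambda>(k, x, y). (x, y, k :: nat)"
  let ?cells = "\<lambda>k. {(x, y) \<in> diagram (fst (cs ! (k - 1))). (snd (cs ! (k - 1)) + int y - int x) mod int e = j}"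
  have p: "is_partition (fst (cs ! (k - 1)))" if "k \<in> {1..length cs}" for k
    using assms that unfolding is_multiconfig_def by (auto intro: nth_mem)
  have fin_cells: "finite (?cells k)" if "k \<in> {1..length cs}" for k
    using finite_diagram[OF p[OF that]] by (rule finite_subset[rotated]) auto
  have inj: "inj_on ?swap A" for A by (auto simp: inj_on_def)
  have "nodes cs = ?swap ` (SIGMA k:{1..length cs}. diagram (fst (cs ! (k - 1))))"
    unfolding nodes_def diagram_def by force
  moreover have "finite (SIGMA k:{1..length cs}. diagram (fst (cs ! (k - 1))))"
    using finite_diagram[OF p] by (intro finite_SigmaI) auto
  ultimately have "finite (nodes cs)" by simp
  then have "count (residue_mset e cs) j = card (?res -` {j} \<inter> nodes cs)"
    unfolding residue_mset_def count_image_mset by simp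
  also have "?res -` {j} \<inter> nodes cs = ?swap ` (SIGMA k:{1..length cs}. ?cells k)"
    unfolding nodes_def diagram_def by force
  also have "card \<dots> = (\<Sum>k\<in>{1..length cs}. card (?cells k))"
    using fin_cells by (simp add: card_image[OF inj] card_SigmaI)
  also have "\<dots> = (\<Sum>k<length cs. res_count e (cs ! k) j)"
    using sum.atLeast1_atMost_eq[of "\<lambda>k. card (?cells k)" "length cs"]
    unfolding res_count_def by simp
  also have "\<dots> = (\<Sum>c\<leftarrow>cs. res_count e c j)"
    by (simp add: sum_list_sum_nth atLeast0LessThan)
  finally show ?thesis .
qed

section \<open>Block invariants\<close>

definition bead_total :: "int \<Rightarrow> (int \<Rightarrow> int) \<Rightarrow> config list \<Rightarrow> int" where
  "bead_total L h cs = (\<Sum>c\<leftarrow>cs. bead_sum L h c)"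

definition residue_indicator :: "nat \<Rightarrow> nat \<Rightarrow> int \<Rightarrow> int" where
  "residue_indicator e i b = of_bool (b mod int e = int i)"

lemma bead_total_add: "bead_total L (\<lambda>b. f b + g b) cs = bead_total L f cs + bead_total L g cs"
  unfolding bead_total_def bead_sum_def by (induction cs) (simp_all add: sum.distrib)

lemma bead_total_diff: "bead_total L (\<lambda>b. f b - g b) cs = bead_total L f cs - bead_total L g cs"
  unfolding bead_total_def bead_sum_def by (induction cs) (simp_all add: sum_subtractf)

lemma bead_total_scale: "bead_total L (\<lambda>b. k * f b) cs = k * bead_total L f cs"
  unfolding bead_total_def bead_sum_def by (induction cs) (simp_all add: sum_distrib_left algebra_simps)

lemma bead_total_sum: "bead_total L (\<lambda>b. \<Sum>i<m. f i b) cs = (\<Sum>i<m. bead_total L (f i) cs)"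
  unfolding bead_total_def bead_sum_def
  by (induction cs) (simp_all add: sum.swap[of _ "{..<m}"] sum.distrib)

lemma sum_list_cong_snd:
  assumes "map snd xs = map snd ys"
  shows "(\<Sum>c\<leftarrow>xs. g (snd c)) = (\<Sum>c\<leftarrow>ys. g (snd c))"
proof -
  have "(\<Sum>c\<leftarrow>xs. g (snd c)) = sum_list (map g (map snd xs))" by (simp add: comp_def)
  also have "\<dots> = sum_list (map g (map snd ys))" by (simp only: assms)
  also have "\<dots> = (\<Sum>c\<leftarrow>ys. g (snd c))" by (simp add: comp_def)
  finally show ?thesis .
qed

lemma multi_size_eq_bead_total:
  assumes "is_multiconfig cs" and "\<forall>c\<in>set cs. {..<L} \<subseteq> beads c"
  shows "int (multi_size cs) = bead_total L (\<lambda>b. b) cs - (\<Sum>c\<leftarrow>cs. \<Sum>a\<in>{L..<snd c}. a)"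
  using assms unfolding multi_size_def bead_total_def is_multiconfig_def
  by (induction cs) (auto simp: part_size_eq_bead_sum)

lemma count_residue_mset_eq_bead_total:
  assumes e: "0 < e" "0 \<le> j" "j < int e"
    and "is_multiconfig cs" and "\<forall>c\<in>set cs. {..<L} \<subseteq> beads c"
  shows "int (count (residue_mset e cs) j)
    = bead_total L (\<lambda>b. (b - j) div int e) cs - (\<Sum>c\<leftarrow>cs. \<Sum>a\<in>{L..<snd c}. (a - j) div int e)"
  using assms(4,5) unfolding count_residue_mset[OF assms(4)] bead_total_def is_multiconfig_def
  by (induction cs) (auto simp: res_count_eq_bead_sum[OF e])

lemma bead_total_one:
  assumes "is_multiconfig cs" and "\<forall>c\<in>set cs. {..<L} \<subseteq> beads c"
  shows "bead_total L (\<lambda>_. 1) cs = (\<Sum>c\<leftarrow>cs. snd c - L)"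
  using assms unfolding bead_total_def is_multiconfig_def
  by (induction cs) (auto simp: charge_eq_bead_count[of _ L])

lemma count_residue_mset_eq_0:
  assumes "0 < e" "\<not> (0 \<le> j \<and> j < int e)" "is_multiconfig cs"
  shows "count (residue_mset e cs) j = 0"
  using assms by (simp add: count_residue_mset res_count_eq_0)

lemma block_equiv_iff_floor_totals:
  assumes e: "0 < e" and mx: "is_multiconfig xs" and my: "is_multiconfig ys"
    and Lx: "\<forall>c\<in>set xs. {..<L} \<subseteq> beads c" and Ly: "\<forall>c\<in>set ys. {..<L} \<subseteq> beads c"
  shows "block_equiv e xs ys \<longleftrightarrow> map snd xs = map snd ys
    \<and> bead_total L (\<lambda>b. b) xs = bead_total L (\<lambda>b. b) ys
    \<and> (\<forall>j<e. bead_total L (\<lambda>b. (b - int j) div int e) xs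
             = bead_total L (\<lambda>b. (b - int j) div int e) ys)"
proof (cases "map snd xs = map snd ys")
  case False
  then show ?thesis unfolding block_equiv_def by simp
next
  case charges: True
  have "int (multi_size xs) - int (multi_size ys) = bead_total L (\<lambda>b. b) xs - bead_total L (\<lambda>b. b) ys"
    using multi_size_eq_bead_total[OF mx Lx] multi_size_eq_bead_total[OF my Ly]
      sum_list_cong_snd[OF charges, of "\<lambda>s. \<Sum>a\<in>{L..<s}. a"] by simp
  then have size: "multi_size xs = multi_size ys \<longleftrightarrow> bead_total L (\<lambda>b. b) xs = bead_total L (\<lambda>b. b) ys"
    by linarith
  have count: "count (residue_mset e xs) (int j) = count (residue_mset e ys) (int j)
      \<longleftrightarrow> bead_total L (\<lambda>b. (b - int j) div int e) xs = bead_total L (\<lambda>b. (b - int j) div int e) ys"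
    if "j < e" for j
  proof -
    have "int (count (residue_mset e xs) (int j)) - int (count (residue_mset e ys) (int j))
        = bead_total L (\<lambda>b. (b - int j) div int e) xs - bead_total L (\<lambda>b. (b - int j) div int e) ys"
      using count_residue_mset_eq_bead_total[OF e _ _ mx Lx, of "int j"]
        count_residue_mset_eq_bead_total[OF e _ _ my Ly, of "int j"] that
        sum_list_cong_snd[OF charges, of "\<lambda>s. \<Sum>a\<in>{L..<s}. (a - int j) div int e"] by simp
    then show ?thesis by linarith
  qed
  have "residue_mset e xs = residue_mset e ys
      \<longleftrightarrow> (\<forall>j<e. count (residue_mset e xs) (int j) = count (residue_mset e ys) (int j))"
  proof
    assume "\<forall>j<e. count (residue_mset e xs) (int j) = count (residue_mset e ys) (int j)"
    then have "count (residue_mset e xs) a = count (residue_mset e ys) a" for a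
      using count_residue_mset_eq_0[OF e _ mx, of a] count_residue_mset_eq_0[OF e _ my, of a]
      by (cases "0 \<le> a \<and> a < int e") (metis int_nat_eq nat_less_iff, simp)
    then show "residue_mset e xs = residue_mset e ys" by (simp add: multiset_eq_iff)
  qed simp
  then show ?thesis unfolding block_equiv_def using charges size count by simp
qed

lemma residue_indicator_sum:
  assumes "0 < e"
  shows "(\<Sum>i<m. f i * residue_indicator e i b) = (if nat (b mod int e) < m then f (nat (b mod int e)) else 0)"
proof -
  have "residue_indicator e i b = of_bool (i = nat (b mod int e))" for i
    using assms unfolding residue_indicator_def by auto
  then show ?thesis by (simp add: of_bool_def if_distrib[of "\<lambda>x. _ * x"] cong: if_cong)
qed

lemma sum_residue_indicator: "0 < e \<Longrightarrow> (\<Sum>i<e. residue_indicator e i b) = 1"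
  using residue_indicator_sum[where f = "\<lambda>_. 1" and m = e] by (simp add: nat_less_iff)

lemma mod_eq_sum_residue_indicator: "0 < e \<Longrightarrow> b mod int e = (\<Sum>i<e. int i * residue_indicator e i b)"
  using residue_indicator_sum[where f = int and m = e] by (simp add: nat_less_iff)

lemma diff_div_eq_sub_residue_indicators:
  assumes "0 < e" "j \<le> e"
  shows "(b - int j) div int e = b div int e - (\<Sum>i<j. residue_indicator e i b)"
  using diff_div_eq_div_minus_of_bool[of "int e" "int j" b]
    residue_indicator_sum[where f = "\<lambda>_. 1" and m = j and b = b] assms
  by (simp add: nat_less_iff)

text \<open>The residue count for j is the floor statistic b \<mapsto> (b - j) div e; consecutive floor
  statistics differ by a residue indicator, and e times the first one is the identity
  minus a combination of residue indicators.\<close>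
lemma floor_functionals_vanish_iff_residue_functionals_vanish:
  fixes T :: "(int \<Rightarrow> int) \<Rightarrow> int"
  assumes e: "0 < e"
    and T_diff: "\<And>f g. T (\<lambda>b. f b - g b) = T f - T g"
    and T_scale: "\<And>k f. T (\<lambda>b. k * f b) = k * T f"
    and T_sum: "\<And>f (m :: nat). T (\<lambda>b. \<Sum>i<m. f i b) = (\<Sum>i<m. T (f i))"
    and T_id: "T (\<lambda>b. b) = 0" and T_one: "T (\<lambda>_. 1) = 0"
  shows "(\<forall>j<e. T (\<lambda>b. (b - int j) div int e) = 0) \<longleftrightarrow> (\<forall>i<e. T (residue_indicator e i) = 0)"
proof -
  let ?F = "\<lambda>j b. (b - int j) div int e"
  let ?\<chi> = "residue_indicator e"
  have F: "T (?F j) = T (?F 0) - (\<Sum>i<j. T (?\<chi> i))" if "j \<le> e" for j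
  proof -
    have "?F j = (\<lambda>b. ?F 0 b - (\<Sum>i<j. ?\<chi> i b))"
      using diff_div_eq_sub_residue_indicators[OF e that] by simp
    then show ?thesis using T_diff[of "?F 0" "\<lambda>b. \<Sum>i<j. ?\<chi> i b"] T_sum[of ?\<chi> j] by simp
  qed
  have "(\<lambda>b. int e * ?F 0 b) = (\<lambda>b. b - (\<Sum>i<e. int i * ?\<chi> i b))"
    by (simp add: fun_eq_iff mod_eq_sum_residue_indicator[OF e, symmetric] minus_mod_eq_mult_div)
  then have F0: "int e * T (?F 0) = - (\<Sum>i<e. int i * T (?\<chi> i))"
    using T_scale[of "int e" "?F 0"] T_diff[of "\<lambda>b. b"] T_sum[of "\<lambda>i b. int i * ?\<chi> i b" e] T_scale T_id
    by simp
  have "(\<lambda>_. 1) = (\<lambda>b. \<Sum>i<e. ?\<chi> i b)" using sum_residue_indicator[OF e] by simp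
  then have all: "(\<Sum>i<e. T (?\<chi> i)) = 0" using T_sum[of ?\<chi> e] T_one by metis
  show ?thesis
  proof
    assume \<chi>: "\<forall>i<e. T (?\<chi> i) = 0"
    then have "T (?F 0) = 0" using F0 e by simp
    then show "\<forall>j<e. T (?F j) = 0" using F \<chi> by simp
  next
    assume Fj: "\<forall>j<e. T (?F j) = 0"
    have "T (?F 0) = 0" using Fj e by blast
    then have "T (?F e) = 0" using F[of e] all by simp
    then have F_all: "T (?F j) = 0" if "j \<le> e" for j using Fj that by (cases "j = e") auto
    show "\<forall>i<e. T (?\<chi> i) = 0"
    proof (intro allI impI)
      fix i assume "i < e"
      then have "T (?F (Suc i)) = T (?F i) - T (?\<chi> i)" using F[of i] F[of "Suc i"] by simp
      then show "T (?\<chi> i) = 0" using F_all[of i] F_all[of "Suc i"] \<open>i < e\<close> by simp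
    qed
  qed
qed

lemma block_equiv_iff_bead_totals:
  assumes e: "0 < e" and mx: "is_multiconfig xs" and my: "is_multiconfig ys"
    and Lx: "\<forall>c\<in>set xs. {..<L} \<subseteq> beads c" and Ly: "\<forall>c\<in>set ys. {..<L} \<subseteq> beads c"
  shows "block_equiv e xs ys \<longleftrightarrow> map snd xs = map snd ys
    \<and> bead_total L (\<lambda>b. b) xs = bead_total L (\<lambda>b. b) ys
    \<and> (\<forall>i<e. bead_total L (residue_indicator e i) xs = bead_total L (residue_indicator e i) ys)"
proof -
  let ?T = "\<lambda>h. bead_total L h xs - bead_total L h ys"
  have "(\<forall>j<e. ?T (\<lambda>b. (b - int j) div int e) = 0) \<longleftrightarrow> (\<forall>i<e. ?T (residue_indicator e i) = 0)"
    if "map snd xs = map snd ys" "?T (\<lambda>b. b) = 0"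
  proof (rule floor_functionals_vanish_iff_residue_functionals_vanish[OF e])
    show "?T (\<lambda>b. b) = 0" by (rule that(2))
    show "?T (\<lambda>_. 1) = 0"
      using bead_total_one[OF mx Lx] bead_total_one[OF my Ly] sum_list_cong_snd[OF that(1)] by simp
  qed (simp_all add: bead_total_diff bead_total_scale bead_total_sum sum_subtractf algebra_simps)
  then show ?thesis unfolding block_equiv_iff_floor_totals[OF assms] by auto
qed

section \<open>Stretching\<close>

definition runner :: "nat \<Rightarrow> nat \<Rightarrow> int set \<Rightarrow> int set" where
  "runner e i B = {(b - int i) div int e | b. b \<in> B \<and> b mod int e = int i}"

lemma eta_eq_runners: "eta e c = map (\<lambda>i. config_of (runner e i (beads c))) [0..<e]"
  unfolding eta_def runner_def beads_def by simp

lemma runner_mem: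
  assumes e: "0 < e" and i: "i < e"
  shows "a \<in> runner e i B \<longleftrightarrow> a * int e + int i \<in> B"
proof
  assume "a \<in> runner e i B"
  then obtain b where b: "b \<in> B" "b mod int e = int i" "a = (b - int i) div int e"
    unfolding runner_def by blast
  have "b - int i = b div int e * int e" using b(2) div_mult_mod_eq[of b "int e"] by simp
  then have "a = b div int e" using b(3) e by simp
  then show "a * int e + int i \<in> B" using b div_mult_mod_eq[of b "int e"] by simp
next
  assume "a * int e + int i \<in> B"
  moreover have "(a * int e + int i) mod int e = int i" using e i by simp
  moreover have "(a * int e + int i - int i) div int e = a" using e by simp
  ultimately show "a \<in> runner e i B" unfolding runner_def by (metis (mono_tags, lifting) mem_Collect_eq)
qed

lemma is_beta_set_runner:
  assumes B: "is_beta_set B" and e: "0 < e" and i: "i < e"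
  shows "is_beta_set (runner e i B)"
proof -
  obtain n where n: "\<forall>b\<le>n. b \<in> B" using B unfolding is_beta_set_def by blast
  obtain m where m: "\<forall>b\<ge>m. b \<notin> B" using B unfolding is_beta_set_def by blast
  have "a \<in> runner e i B" if "a \<le> n div int e - 1" for a
  proof -
    have "a * int e \<le> (n div int e - 1) * int e" using that e by (intro mult_right_mono) auto
    also have "\<dots> \<le> n - int e"
    proof -
      have "n div int e * int e + n mod int e = n" by (rule div_mult_mod_eq)
      moreover have "0 \<le> n mod int e" using e by simp
      ultimately have "n div int e * int e \<le> n" by linarith
      then show ?thesis by (simp add: left_diff_distrib)
    qed
    finally show ?thesis using n i runner_mem[OF e i] by simp
  qed
  moreover have "a \<notin> runner e i B" if "\<bar>m\<bar> \<le> a" for a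
  proof -
    have "0 \<le> a" using that by simp
    then have "a \<le> a * int e" using e mult_left_mono[of 1 "int e" a] by simp
    then show ?thesis using that m runner_mem[OF e i] by simp
  qed
  ultimately show ?thesis unfolding is_beta_set_def by blast
qed

lemma eq_if_runners_eq:
  assumes e: "0 < e" and runners: "\<forall>i<e. runner e i B = runner e i B'"
  shows "B = B'"
proof (rule set_eqI)
  fix b
  define i where "i = nat (b mod int e)"
  have i: "i < e" "b = b div int e * int e + int i"
    using e div_mult_mod_eq[of b "int e"] unfolding i_def by (auto simp: nat_less_iff)
  show "b \<in> B \<longleftrightarrow> b \<in> B'"
    using runner_mem[OF e i(1), of "b div int e"] runners i by (metis)
qed

lemma beta_set_shift: "beta_set (t + m) rho = (\<lambda>x. x + m) ` beta_set t rho"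
  unfolding beta_set_eq_range beta_num_def by (auto simp: image_iff algebra_simps)

lemma config_eq_if_eta_eq:
  assumes e: "0 < e" and p: "is_partition (fst c)" "is_partition (fst c')" and eta: "eta e c = eta e c'"
  shows "c = c'"
proof -
  have "runner e i (beads c) = runner e i (beads c')" if i: "i < e" for i
  proof -
    have "config_of (runner e i (beads c)) = config_of (runner e i (beads c'))"
      using arg_cong[OF eta, of "\<lambda>xs. xs ! i"] i unfolding eta_eq_runners by simp
    then show ?thesis
      using beads_config_of(2)[OF is_beta_set_runner[OF is_beta_set_beads e i]] p by metis
  qed
  then have "beads c = beads c'" using eq_if_runners_eq[OF e] by blast
  then show ?thesis using beads_eq_iff[OF p] by blast
qed

definition stretch_bead :: "nat \<Rightarrow> int list \<Rightarrow> int \<Rightarrow> int" where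
  "stretch_bead e M b = b + int e * M ! nat (b mod int e)"

definition stretch_gap :: "nat \<Rightarrow> int list \<Rightarrow> int \<Rightarrow> int set" where
  "stretch_gap e M L = {b. b < L \<and> L \<le> stretch_bead e M b}"

lemma stretch_bead_mod: "stretch_bead e M b mod int e = b mod int e"
  unfolding stretch_bead_def by simp

lemma residue_indicator_stretch_bead: "residue_indicator e i (stretch_bead e M b) = residue_indicator e i b"
  unfolding residue_indicator_def stretch_bead_mod ..

lemma inj_stretch_bead: "inj (stretch_bead e M)"
proof (rule injI)
  fix a b assume eq: "stretch_bead e M a = stretch_bead e M b"
  then have "a mod int e = b mod int e" by (metis stretch_bead_mod)
  then show "a = b" using eq unfolding stretch_bead_def by simp
qed

lemma stretch_bead_eq_sum:
  "0 < e \<Longrightarrow> stretch_bead e M b = b + int e * (\<Sum>i<e. M ! i * residue_indicator e i b)"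
  unfolding stretch_bead_def by (simp add: residue_indicator_sum nat_less_iff)

lemma runner_stretch:
  assumes e: "0 < e" and i: "i < e"
  shows "runner e i (stretch_bead e M ` B) = (\<lambda>x. x + M ! i) ` runner e i B"
proof (intro equalityI subsetI)
  fix a assume "a \<in> runner e i (stretch_bead e M ` B)"
  then obtain b where b: "b \<in> B" "stretch_bead e M b = a * int e + int i"
    using runner_mem[OF e i] by auto
  have "b mod int e = int i" using stretch_bead_mod[of e M b] b(2) e i by simp
  then have "b = (a - M ! i) * int e + int i" using b(2) unfolding stretch_bead_def by (simp add: algebra_simps)
  then have "a - M ! i \<in> runner e i B" using b(1) runner_mem[OF e i] by simp
  then show "a \<in> (\<lambda>x. x + M ! i) ` runner e i B" by force
next
  fix a assume "a \<in> (\<lambda>x. x + M ! i) ` runner e i B"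
  then obtain d where d: "d \<in> runner e i B" "a = d + M ! i" by blast
  have "(d * int e + int i) mod int e = int i" using e i by simp
  then have "stretch_bead e M (d * int e + int i) = a * int e + int i"
    unfolding stretch_bead_def d(2) by (simp add: algebra_simps)
  then show "a \<in> runner e i (stretch_bead e M ` B)"
    using d(1) runner_mem[OF e i] by (metis image_eqI)
qed

context
  fixes e :: nat and M :: "int list"
  assumes e: "0 < e" and M_length: "length M = e" and M_nonneg: "\<forall>m\<in>set M. 0 \<le> m"
begin

lemma stretch_shift_bounds: "0 \<le> M ! nat (b mod int e)" "M ! nat (b mod int e) \<le> sum_list M"
proof -
  have "nat (b mod int e) < length M" using e M_length by (simp add: nat_less_iff)
  then have "M ! nat (b mod int e) \<in> set M" by (rule nth_mem)
  then show "0 \<le> M ! nat (b mod int e)" "M ! nat (b mod int e) \<le> sum_list M"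
    using M_nonneg member_le_sum_list[of _ M] by auto
qed

lemma stretch_bead_ge: "b \<le> stretch_bead e M b"
  unfolding stretch_bead_def using stretch_shift_bounds(1)[of b] by simp

lemma stretch_bead_le: "stretch_bead e M b \<le> b + int e * sum_list M"
  unfolding stretch_bead_def using stretch_shift_bounds(2)[of b] by (simp add: mult_left_mono)

lemma lessThan_subset_stretch_image:
  assumes "{..<L} \<subseteq> B"
  shows "{..<L} \<subseteq> stretch_bead e M ` B"
proof
  fix a assume a: "a \<in> {..<L}"
  define b where "b = a - int e * M ! nat (a mod int e)"
  have "b = a + (- M ! nat (a mod int e)) * int e" unfolding b_def by simp
  then have "b mod int e = a mod int e" by (simp only: mod_mult_self1)
  then have "stretch_bead e M b = a" unfolding stretch_bead_def b_def by simp
  moreover have "b \<le> a" unfolding b_def using stretch_shift_bounds(1)[of a] by simp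
  then have "b \<in> B" using assms a by auto
  ultimately show "a \<in> stretch_bead e M ` B" by blast
qed

lemma is_beta_set_stretch_image:
  assumes "is_beta_set B"
  shows "is_beta_set (stretch_bead e M ` B)"
proof -
  obtain n where n: "\<forall>b\<le>n. b \<in> B" using assms unfolding is_beta_set_def by blast
  obtain m where m: "\<forall>b\<ge>m. b \<notin> B" using assms unfolding is_beta_set_def by blast
  have "{..<n + 1} \<subseteq> B" using n by auto
  then have "{..<n + 1} \<subseteq> stretch_bead e M ` B" by (rule lessThan_subset_stretch_image)
  then have "b \<in> stretch_bead e M ` B" if "b \<le> n" for b using that by auto
  moreover have "a \<notin> stretch_bead e M ` B" if a: "m + int e * sum_list M \<le> a" for a
  proof
    assume "a \<in> stretch_bead e M ` B"
    then obtain b where "b \<in> B" "a = stretch_bead e M b" by blast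
    then show False using a m stretch_bead_le[of b] by auto
  qed
  ultimately show ?thesis unfolding is_beta_set_def by blast
qed

lemma eta_config_of_stretch:
  assumes p: "is_partition (fst c)"
  shows "eta e (config_of (stretch_bead e M ` beads c))
    = map (\<lambda>i. (fst (eta e c ! i), snd (eta e c ! i) + M ! i)) [0..<e]"
proof -
  have "config_of (runner e i (stretch_bead e M ` beads c)) = (fst (eta e c ! i), snd (eta e c ! i) + M ! i)"
    if i: "i < e" for i
  proof -
    define X where "X = config_of (runner e i (beads c))"
    have X: "is_partition (fst X)" "beta_set (snd X) (fst X) = runner e i (beads c)"
      using beads_config_of[OF is_beta_set_runner[OF is_beta_set_beads[OF p] e i]]
      unfolding X_def beads_def by auto
    have "runner e i (stretch_bead e M ` beads c) = beta_set (snd X + M ! i) (fst X)"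
      unfolding runner_stretch[OF e i] beta_set_shift X(2) ..
    moreover have "eta e c ! i = X" unfolding eta_eq_runners X_def using i by simp
    ultimately show ?thesis using config_of_beta_set[OF X(1)] by simp
  qed
  moreover have "beads (config_of (stretch_bead e M ` beads c)) = stretch_bead e M ` beads c"
    by (rule beads_config_of(2)[OF is_beta_set_stretch_image[OF is_beta_set_beads[OF p]]])
  ultimately show ?thesis
    unfolding eta_eq_runners[of e "config_of (stretch_bead e M ` beads c)"] by (intro map_cong) auto
qed

lemma Str_eq_config_of_stretch:
  assumes p: "is_partition (fst c)"
  shows "Str e c M = config_of (stretch_bead e M ` beads c)"
proof -
  let ?c = "config_of (stretch_bead e M ` beads c)"
  have p': "is_partition (fst ?c)"
    by (rule beads_config_of(1)[OF is_beta_set_stretch_image[OF is_beta_set_beads[OF p]]])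
  show ?thesis
    unfolding Str_def
  proof (rule the_equality)
    fix c' assume c': "is_partition (fst c') \<and> eta e c' = map (\<lambda>i. (fst (eta e c ! i), snd (eta e c ! i) + M ! i)) [0..<e]"
    then have "eta e c' = eta e ?c" using eta_config_of_stretch[OF p] by simp
    then show "c' = ?c" using config_eq_if_eta_eq[OF e _ p'] c' by blast
  qed (use p' eta_config_of_stretch[OF p] in simp)
qed

lemma partition_beads_Str:
  assumes p: "is_partition (fst c)"
  shows "is_partition (fst (Str e c M))" and "beads (Str e c M) = stretch_bead e M ` beads c"
  using beads_config_of[OF is_beta_set_stretch_image[OF is_beta_set_beads[OF p]]]
  unfolding Str_eq_config_of_stretch[OF p] by auto

lemma finite_stretch_gap: "finite (stretch_gap e M L)"
proof (rule finite_subset)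
  show "stretch_gap e M L \<subseteq> {L - int e * sum_list M..<L}"
  proof
    fix b assume "b \<in> stretch_gap e M L"
    then show "b \<in> {L - int e * sum_list M..<L}"
      using stretch_bead_le[of b] unfolding stretch_gap_def by auto
  qed
qed simp

text \<open>Stretching moves every bead up, so the beads above L afterwards come from the beads
  above L before together with those below L that jump over it.\<close>
lemma stretch_image_above:
  assumes "{..<L} \<subseteq> B"
  shows "stretch_bead e M ` B \<inter> {L..} = stretch_bead e M ` ((B \<inter> {L..}) \<union> stretch_gap e M L)"
    and "B \<inter> {L..} \<inter> stretch_gap e M L = {}"
proof -
  have "B \<inter> {b. L \<le> stretch_bead e M b} = (B \<inter> {L..}) \<union> stretch_gap e M L"
  proof (intro equalityI subsetI)
    fix b assume "b \<in> B \<inter> {b. L \<le> stretch_bead e M b}"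
    then show "b \<in> (B \<inter> {L..}) \<union> stretch_gap e M L" unfolding stretch_gap_def by auto
  next
    fix b assume "b \<in> (B \<inter> {L..}) \<union> stretch_gap e M L"
    then show "b \<in> B \<inter> {b. L \<le> stretch_bead e M b}"
      using assms stretch_bead_ge[of b] unfolding stretch_gap_def by auto
  qed
  moreover have "stretch_bead e M ` B \<inter> {L..} = stretch_bead e M ` (B \<inter> {b. L \<le> stretch_bead e M b})"
    by auto
  ultimately show "stretch_bead e M ` B \<inter> {L..} = stretch_bead e M ` ((B \<inter> {L..}) \<union> stretch_gap e M L)"
    by simp
  show "B \<inter> {L..} \<inter> stretch_gap e M L = {}" unfolding stretch_gap_def by auto
qed

lemma bead_sum_Str:
  assumes p: "is_partition (fst c)" and L: "{..<L} \<subseteq> beads c"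
  shows "bead_sum L h (Str e c M)
    = bead_sum L (\<lambda>b. h (stretch_bead e M b)) c + (\<Sum>b\<in>stretch_gap e M L. h (stretch_bead e M b))"
  unfolding bead_sum_def partition_beads_Str(2)[OF p] stretch_image_above(1)[OF L]
  using finite_beads_above[OF p L] finite_stretch_gap stretch_image_above(2)[OF L]
  by (simp add: sum.reindex inj_on_subset[OF inj_stretch_bead] sum.union_disjoint)

lemma below_level_Str:
  assumes "is_partition (fst c)" "{..<L} \<subseteq> beads c"
  shows "{..<L} \<subseteq> beads (Str e c M)"
  unfolding partition_beads_Str(2)[OF assms(1)] using lessThan_subset_stretch_image[OF assms(2)] .

lemma charge_Str:
  assumes p: "is_partition (fst c)" and L: "{..<L} \<subseteq> beads c"
  shows "snd (Str e c M) = snd c + int (card (stretch_gap e M L))"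
  using charge_eq_bead_count[OF partition_beads_Str(1)[OF p] below_level_Str[OF p L]]
    charge_eq_bead_count[OF p L] bead_sum_Str[OF p L, of "\<lambda>_. 1"] by simp

lemma multiconfig_Str_multi:
  assumes "is_multiconfig cs" and "\<forall>c\<in>set cs. {..<L} \<subseteq> beads c"
  shows "is_multiconfig (Str_multi e cs M)" and "\<forall>c\<in>set (Str_multi e cs M). {..<L} \<subseteq> beads c"
  using assms partition_beads_Str(1) below_level_Str
  unfolding is_multiconfig_def Str_multi_def by auto

lemma map_snd_Str_multi:
  assumes "is_multiconfig cs" and "\<forall>c\<in>set cs. {..<L} \<subseteq> beads c"
  shows "map snd (Str_multi e cs M) = map (\<lambda>s. s + int (card (stretch_gap e M L))) (map snd cs)"
  using assms charge_Str unfolding is_multiconfig_def Str_multi_def by simp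

lemma bead_total_stretch_bead:
  "bead_total L (stretch_bead e M) cs
    = bead_total L (\<lambda>b. b) cs + int e * (\<Sum>i<e. M ! i * bead_total L (residue_indicator e i) cs)"
proof -
  have "stretch_bead e M = (\<lambda>b. b + int e * (\<Sum>i<e. M ! i * residue_indicator e i b))"
    using stretch_bead_eq_sum[OF e] by (simp add: fun_eq_iff)
  then show ?thesis by (simp add: bead_total_add bead_total_scale bead_total_sum)
qed

lemma bead_total_Str_multi:
  assumes "is_multiconfig cs" and "\<forall>c\<in>set cs. {..<L} \<subseteq> beads c"
  shows "bead_total L h (Str_multi e cs M) = bead_total L (\<lambda>b. h (stretch_bead e M b)) cs
    + int (length cs) * (\<Sum>b\<in>stretch_gap e M L. h (stretch_bead e M b))"
  using assms unfolding is_multiconfig_def Str_multi_def bead_total_def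
  by (induction cs) (auto simp: bead_sum_Str algebra_simps)

lemma Str_multi_charges_eq_iff:
  assumes "is_multiconfig cs" "\<forall>c\<in>set cs. {..<L} \<subseteq> beads c"
    and "is_multiconfig ds" "\<forall>c\<in>set ds. {..<L} \<subseteq> beads c"
  shows "map snd (Str_multi e cs M) = map snd (Str_multi e ds M) \<longleftrightarrow> map snd cs = map snd ds"
  unfolding map_snd_Str_multi[OF assms(1,2)] map_snd_Str_multi[OF assms(3,4)]
  by (rule inj_map_eq_map) (simp add: inj_on_def)

lemma Str_multi_residue_totals_eq_iff:
  assumes "is_multiconfig cs" "\<forall>c\<in>set cs. {..<L} \<subseteq> beads c"
    and "is_multiconfig ds" "\<forall>c\<in>set ds. {..<L} \<subseteq> beads c"
    and "length cs = length ds"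
  shows "bead_total L (residue_indicator e i) (Str_multi e cs M) = bead_total L (residue_indicator e i) (Str_multi e ds M)
    \<longleftrightarrow> bead_total L (residue_indicator e i) cs = bead_total L (residue_indicator e i) ds"
  using bead_total_Str_multi[OF assms(1,2)] bead_total_Str_multi[OF assms(3,4)] assms(5)
  by (intro diff_eq_diff_eq) (simp add: residue_indicator_stretch_bead)

lemma Str_multi_content_totals_eq_iff:
  assumes "is_multiconfig cs" "\<forall>c\<in>set cs. {..<L} \<subseteq> beads c"
    and "is_multiconfig ds" "\<forall>c\<in>set ds. {..<L} \<subseteq> beads c"
    and "length cs = length ds"
    and residues: "\<forall>i<e. bead_total L (residue_indicator e i) cs = bead_total L (residue_indicator e i) ds"
  shows "bead_total L (\<lambda>b. b) (Str_multi e cs M) = bead_total L (\<lambda>b. b) (Str_multi e ds M)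
    \<longleftrightarrow> bead_total L (\<lambda>b. b) cs = bead_total L (\<lambda>b. b) ds"
proof (rule diff_eq_diff_eq)
  have "(\<Sum>i<e. M ! i * bead_total L (residue_indicator e i) cs)
      = (\<Sum>i<e. M ! i * bead_total L (residue_indicator e i) ds)"
    using residues by simp
  then show "bead_total L (\<lambda>b. b) (Str_multi e cs M) - bead_total L (\<lambda>b. b) (Str_multi e ds M)
      = bead_total L (\<lambda>b. b) cs - bead_total L (\<lambda>b. b) ds"
    using bead_total_Str_multi[OF assms(1,2), of "\<lambda>b. b"] bead_total_Str_multi[OF assms(3,4), of "\<lambda>b. b"]
    by (simp add: bead_total_stretch_bead assms(5))
qed

end

theorem lemma3p7:
  fixes e r :: nat and M :: "int list" and cs ds :: "config list"
  assumes "e \<ge> 2" and "r \<ge> 1"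
    and "length M = e" and "\<forall>m\<in>set M. m \<ge> 0"
    and "is_multiconfig cs" and "length cs = r"
    and "is_multiconfig ds" and "length ds = r"
  shows "block_equiv e cs ds \<longleftrightarrow> block_equiv e (Str_multi e cs M) (Str_multi e ds M)"
proof -
  have e: "0 < e" using assms(1) by simp
  note stretch = e assms(3,4)
  obtain L where "\<forall>c\<in>set (cs @ ds). {..<L} \<subseteq> beads c"
    using exists_level_below_beads assms(5,7) unfolding is_multiconfig_def by (metis Un_iff set_append)
  then have cs: "is_multiconfig cs" "\<forall>c\<in>set cs. {..<L} \<subseteq> beads c"
    and ds: "is_multiconfig ds" "\<forall>c\<in>set ds. {..<L} \<subseteq> beads c"
    using assms(5,7) by auto
  have same_length: "length cs = length ds" using assms(6,8) by simp
  note cs' = multiconfig_Str_multi[OF stretch cs] and ds' = multiconfig_Str_multi[OF stretch ds]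
  show ?thesis
    unfolding block_equiv_iff_bead_totals[OF e cs(1) ds(1) cs(2) ds(2)]
      block_equiv_iff_bead_totals[OF e cs'(1) ds'(1) cs'(2) ds'(2)]
    using Str_multi_charges_eq_iff[OF stretch cs ds]
      Str_multi_residue_totals_eq_iff[OF stretch cs ds same_length]
      Str_multi_content_totals_eq_iff[OF stretch cs ds same_length]
    by blast
qed

end
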